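(* Let $L$ be a positive integer and let $J \subseteq [L]$ be a nonempty subset with $l := |J|$. Then for every $\alpha \in (0,1)$ there exist $j_1, j_2 \in J$ such that (i) $l/2 \le j_1 \le j_2 \le (1+\alpha) j_1$; (ii) $|J \cap [j_1, j_2]| \ge c_\alpha \dfrac{l}{\log(2L/l)}$, where $c_\alpha > 0$ depends only on $\alpha$.
   Context: $[L] = \{1,\ldots,L\}$; $[j_1,j_2]$ denotes the set of integers between $j_1$ and $j_2$. Logarithms are to base $2$. *)

theory Defs
  imports Complex_Main
begin

end

theory Submission
  imports Defs
begin

text \<open>Discarding the elements of \<open>J\<close> below \<open>l/2\<close> loses at most half of \<open>J\<close>.
  The rest lies in \<open>[l/2, L]\<close>, which is covered by at most \<open>log\<^sub>b(2L/l) + 1\<close> geometric blocks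
  \<open>[(l/2) b\<^sup>k, (l/2) b\<^sup>k\<^sup>+\<^sup>1)\<close> with \<open>b = 1 + \<alpha>\<close>; by pigeonhole one block contains at least
  \<open>l / (2 (log\<^sub>b(2L/l) + 1))\<close> elements of \<open>J\<close>, and its least and largest elements serve as
  \<open>j\<^sub>1\<close> and \<open>j\<^sub>2\<close>. As \<open>2L/l \<ge> 2\<close>, the bound \<open>log\<^sub>b(2L/l) + 1 \<le> (1/log\<^sub>2 b + 1) log\<^sub>2(2L/l)\<close>
  yields \<open>c\<^sub>\<alpha> = 1 / (2 (1/log\<^sub>2(1 + \<alpha>) + 1))\<close>.\<close>

lemma pigeonhole_large_fibre:
  assumes "finite A" "A \<noteq> {}" "\<forall>x\<in>A. f x < (K::nat)"
  shows "\<exists>k<K. card A \<le> K * card {x\<in>A. f x = k}"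
proof (rule ccontr)
  assume small: "\<not> ?thesis"
  have "K > 0" using assms by auto
  have partition: "A = (\<Union>k<K. {x\<in>A. f x = k})" using assms(3) by auto
  have "card A = (\<Sum>k<K. card {x\<in>A. f x = k})"
    by (subst partition, rule card_UN_disjoint) (use assms(1) in auto)
  then have "K * card A = (\<Sum>k<K. K * card {x\<in>A. f x = k})"
    by (simp add: sum_distrib_left)
  also have "\<dots> < (\<Sum>k<K. card A)"
    using small \<open>K > 0\<close> by (intro sum_strict_mono) auto
  finally show False by simp
qed

lemma card_le_twice_card_upper_half:
  assumes "finite J" "0 \<notin> J"
  shows "card J \<le> 2 * card {j\<in>J. card J \<le> 2 * j}"
proof -
  let ?U = "{j\<in>J. card J \<le> 2 * j}"
  have "J - ?U \<subseteq> {1..<(card J + 1) div 2}"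
  proof
    fix j assume "j \<in> J - ?U"
    then have "j \<noteq> 0" using assms(2) by (metis DiffD1)
    have "2 * j < card J" using \<open>j \<in> J - ?U\<close> by auto
    then show "j \<in> {1..<(card J + 1) div 2}" using \<open>j \<noteq> 0\<close> by simp
  qed
  then have "card (J - ?U) \<le> (card J + 1) div 2 - 1"
    using card_mono[OF finite_atLeastLessThan] by fastforce
  moreover have "card (J - ?U) = card J - card ?U"
    using assms(1) by (intro card_Diff_subset) auto
  moreover have "card ?U \<le> card J" using assms(1) by (intro card_mono) auto
  ultimately show ?thesis by linarith
qed

lemma geometric_block_pigeonhole:
  fixes b a M :: real and S :: "nat set"
  assumes "1 < b" "0 < a" "finite S" "S \<noteq> {}" and range: "\<forall>j\<in>S. a \<le> j \<and> j \<le> M"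
  shows "\<exists>F\<subseteq>S. F \<noteq> {} \<and> real (Max F) \<le> b * real (Min F) \<and>
           real (card S) \<le> (log b (M / a) + 1) * real (card F)"
proof -
  define f where "f j = nat \<lfloor>log b (j / a)\<rfloor>" for j :: nat
  define K where "K = nat \<lfloor>log b (M / a)\<rfloor> + 1"
  have ratio_ge_1: "1 \<le> j / a" if "j \<in> S" for j
    using range that \<open>0 < a\<close> by simp
  have "\<forall>j\<in>S. f j < K"
  proof
    fix j assume "j \<in> S"
    then have "j / a \<le> M / a" "0 < j / a" using range ratio_ge_1 \<open>0 < a\<close>
      by (auto simp: divide_right_mono)
    then have "log b (j / a) \<le> log b (M / a)" using \<open>1 < b\<close> by simp
    then show "f j < K" unfolding f_def K_def by (simp add: floor_mono nat_mono le_imp_less_Suc)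
  qed
  then obtain k where "k < K" and fibre: "card S \<le> K * card {j\<in>S. f j = k}"
    using pigeonhole_large_fibre assms(3,4) by blast
  define F where "F = {j\<in>S. f j = k}"
  have "finite F" using assms(3) by (simp add: F_def)
  have "0 < card S" using assms(3,4) by (simp add: card_gt_0_iff)
  then have "0 < card F" using fibre unfolding F_def by (metis gr0I le_zero_eq mult_0_right)
  then have "F \<noteq> {}" by auto
  have block: "b powr k \<le> j / a \<and> j / a < b powr (k + 1)" if "j \<in> F" for j
  proof -
    have "1 \<le> j / a" using ratio_ge_1 that by (simp add: F_def)
    then have "0 \<le> log b (j / a)" using assms(1) by simp
    then have "\<lfloor>log b (j / a)\<rfloor> = int (f j)" by (simp add: f_def)
    then have "\<lfloor>log b (j / a)\<rfloor> = int k" using that by (simp add: F_def)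
    moreover have "0 < j / a" using \<open>1 \<le> j / a\<close> by linarith
    ultimately show ?thesis using floor_log_eq_powr_iff[of "j / a" b "int k"] assms(1)
      by (simp add: add.commute)
  qed
  have "Max F \<in> F" "Min F \<in> F" using \<open>finite F\<close> \<open>F \<noteq> {}\<close> by simp_all
  have "Max F / a < b * b powr k" using block[OF \<open>Max F \<in> F\<close>] \<open>1 < b\<close>
    by (simp add: powr_add)
  also have "\<dots> \<le> b * (Min F / a)" using block[OF \<open>Min F \<in> F\<close>] \<open>1 < b\<close>
    by (intro mult_left_mono) auto
  finally have "real (Max F) \<le> b * real (Min F)" using assms(2) by (simp add: field_simps)
  moreover have "real (card S) \<le> (log b (M / a) + 1) * real (card F)"
  proof -
    obtain j where "j \<in> S" using assms(4) by blast
    then have "1 \<le> M / a" using range \<open>0 < a\<close> by (force simp: le_divide_eq)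
    then have "0 \<le> log b (M / a)" using \<open>1 < b\<close> by simp
    then have "real K \<le> log b (M / a) + 1" unfolding K_def by linarith
    have "real (card S) \<le> real K * real (card F)"
      using fibre unfolding F_def by (metis of_nat_le_iff of_nat_mult)
    also have "\<dots> \<le> (log b (M / a) + 1) * real (card F)"
      using \<open>real K \<le> log b (M / a) + 1\<close> by (rule mult_right_mono) simp
    finally show ?thesis .
  qed
  moreover have "F \<subseteq> S" unfolding F_def by blast
  ultimately show ?thesis using \<open>F \<noteq> {}\<close> by blast
qed

lemma log_add_one_le_mult_log2:
  fixes b x :: real
  assumes "1 < b" "2 \<le> x"
  shows "log b x + 1 \<le> (1 / log 2 b + 1) * log 2 x"
proof -
  have "1 \<le> log 2 x" "0 < log 2 b" using assms by simp_all
  then have "log 2 x / log 2 b + 1 \<le> (1 / log 2 b + 1) * log 2 x"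
    by (simp add: algebra_simps)
  then show ?thesis using log_base_change[of 2 b x] by simp
qed

lemma dense_short_window:
  fixes b :: real and J :: "nat set" and L :: nat
  assumes "1 < b" "J \<subseteq> {1..L}" "J \<noteq> {}"
  shows "\<exists>j1\<in>J. \<exists>j2\<in>J. real (card J) / 2 \<le> j1 \<and> j1 \<le> j2 \<and> real j2 \<le> b * j1 \<and>
           real (card J) \<le> 2 * (log b (2 * real L / real (card J)) + 1) * real (card (J \<inter> {j1..j2}))"
proof -
  define l where "l = card J"
  define U where "U = {j\<in>J. l \<le> 2 * j}"
  have "finite J" using assms(2) finite_subset by blast
  have "0 < l" using \<open>finite J\<close> assms(3) by (simp add: l_def card_gt_0_iff)
  have "0 \<notin> J" using assms(2) by auto
  have "l \<le> 2 * card U"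
    using card_le_twice_card_upper_half[OF \<open>finite J\<close> \<open>0 \<notin> J\<close>] unfolding U_def l_def .
  have "finite U" using \<open>finite J\<close> by (simp add: U_def)
  have "U \<noteq> {}"
  proof
    assume "U = {}"
    then show False using \<open>l \<le> 2 * card U\<close> \<open>0 < l\<close> by simp
  qed
  have range: "\<forall>j\<in>U. real l / 2 \<le> j \<and> j \<le> real L" using assms(2) by (auto simp: U_def)
  have "0 < real l / 2" using \<open>0 < l\<close> by simp
  from geometric_block_pigeonhole[OF assms(1) this \<open>finite U\<close> \<open>U \<noteq> {}\<close> range]
  obtain F where "F \<subseteq> U" "F \<noteq> {}" and short: "real (Max F) \<le> b * real (Min F)"
    and "real (card U) \<le> (log b (real L / (real l / 2)) + 1) * real (card F)"
    by blast
  then have dense: "real (card U) \<le> (log b (2 * real L / real l) + 1) * real (card F)"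
    by (simp add: mult.commute)
  have "finite F" using \<open>F \<subseteq> U\<close> \<open>finite U\<close> finite_subset by blast
  have "Min F \<in> F" "Max F \<in> F" using \<open>F \<noteq> {}\<close> \<open>finite F\<close> by simp_all
  then have "Min F \<in> J" "Max F \<in> J" "Min F \<le> Max F" "real l / 2 \<le> Min F"
    using \<open>F \<subseteq> U\<close> \<open>finite F\<close> range by (auto simp: U_def)
  have "card F \<le> card (J \<inter> {Min F..Max F})"
  proof (rule card_mono)
    show "finite (J \<inter> {Min F..Max F})" using \<open>finite J\<close> by simp
    show "F \<subseteq> J \<inter> {Min F..Max F}" using \<open>F \<subseteq> U\<close> \<open>finite F\<close> by (auto simp: U_def)
  qed
  then have "real (card F) \<le> real (card (J \<inter> {Min F..Max F}))" by (rule of_nat_mono)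
  moreover have "0 \<le> log b (2 * real L / real l)"
  proof -
    have "l \<le> L" using card_mono[OF finite_atLeastAtMost assms(2)] by (simp add: l_def)
    then have "1 \<le> 2 * real L / real l" "0 < 2 * real L / real l"
      using \<open>0 < l\<close> by (simp_all add: field_simps)
    then show ?thesis using assms(1) by simp
  qed
  ultimately have "(log b (2 * real L / real l) + 1) * real (card F)
      \<le> (log b (2 * real L / real l) + 1) * real (card (J \<inter> {Min F..Max F}))"
    by (intro mult_left_mono) simp_all
  with dense have "real (card U) \<le> (log b (2 * real L / real l) + 1) * real (card (J \<inter> {Min F..Max F}))"
    by (rule order_trans)
  then have "real l \<le> 2 * (log b (2 * real L / real l) + 1) * real (card (J \<inter> {Min F..Max F}))"
    using \<open>l \<le> 2 * card U\<close> by linarith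
  with short \<open>Min F \<in> J\<close> \<open>Max F \<in> J\<close> \<open>Min F \<le> Max F\<close> \<open>real l / 2 \<le> Min F\<close>
  show ?thesis unfolding l_def by blast
qed

lemma dense_short_window_log2:
  fixes b :: real and J :: "nat set" and L :: nat
  assumes "1 < b" "J \<subseteq> {1..L}" "J \<noteq> {}"
  shows "\<exists>j1\<in>J. \<exists>j2\<in>J. real (card J) / 2 \<le> j1 \<and> j1 \<le> j2 \<and> real j2 \<le> b * j1 \<and>
           1 / (2 * (1 / log 2 b + 1)) * real (card J) / log 2 (2 * real L / real (card J))
             \<le> real (card (J \<inter> {j1..j2}))"
proof -
  define C where "C = 1 / log 2 b + 1"
  define x where "x = 2 * real L / real (card J)"
  have "0 < C" using assms(1) by (simp add: C_def add_pos_pos)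
  have "0 < card J" "card J \<le> L"
    using assms(2,3) finite_subset card_mono[of "{1..L}" J] by (auto simp: card_gt_0_iff)
  then have "2 \<le> x" by (simp add: x_def field_simps)
  from dense_short_window[OF assms]
  obtain j1 j2 where window: "j1 \<in> J" "j2 \<in> J" "real (card J) / 2 \<le> j1" "j1 \<le> j2" "real j2 \<le> b * j1"
    and dense: "real (card J) \<le> 2 * (log b x + 1) * real (card (J \<inter> {j1..j2}))"
    unfolding x_def by blast
  have "log b x + 1 \<le> C * log 2 x"
    using log_add_one_le_mult_log2[OF assms(1) \<open>2 \<le> x\<close>] by (simp add: C_def)
  then have "2 * (log b x + 1) * real (card (J \<inter> {j1..j2}))
      \<le> 2 * C * log 2 x * real (card (J \<inter> {j1..j2}))"
    by (intro mult_right_mono) simp_all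
  with dense have "real (card J) \<le> 2 * C * log 2 x * real (card (J \<inter> {j1..j2}))"
    by (rule order_trans)
  moreover have "0 < log 2 x" using \<open>2 \<le> x\<close> by simp
  ultimately have "1 / (2 * C) * real (card J) / log 2 x \<le> real (card (J \<inter> {j1..j2}))"
    using \<open>0 < C\<close> by (simp add: field_simps)
  with window show ?thesis unfolding C_def x_def by blast
qed

theorem lemma3p2:
  fixes \<alpha> :: real
  assumes "0 < \<alpha>" and "\<alpha> < 1"
  shows "\<exists>c>0. \<forall>(L::nat) (J::nat set). L \<ge> 1 \<longrightarrow> J \<subseteq> {1..L} \<longrightarrow> J \<noteq> {} \<longrightarrow>
    (\<exists>j1\<in>J. \<exists>j2\<in>J.
       real (card J) / 2 \<le> real j1 \<and> j1 \<le> j2 \<and> real j2 \<le> (1 + \<alpha>) * real j1 \<and>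
       real (card (J \<inter> {j1..j2})) \<ge> c * real (card J) / log 2 (2 * real L / real (card J)))"
proof -
  have "1 < 1 + \<alpha>" using assms(1) by simp
  then have "0 < 1 / (2 * (1 / log 2 (1 + \<alpha>) + 1))" by (simp add: add_pos_pos)
  with dense_short_window_log2[OF \<open>1 < 1 + \<alpha>\<close>] show ?thesis by blast
qed

end
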